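(* Let $X$ be a reflexive complex Banach space, let $A$ be a positive self-adjoint operator from $X$ to $X^\ast$, and let $E$ be a bounded linear operator on $X$ such that $E(\operatorname{dom}A)\subseteq\operatorname{dom}A$ and $E^\ast A\subseteq AE$. Let $\hat E$ denote the bounded operator on $H_A$ obtained by continuous extension of the bounded operator $Ax\mapsto AEx$ on $\operatorname{ran}A$. Then $\hat E$ is a self-adjoint operator on the Hilbert space $H_A$.
   Context: $X^\ast$ denotes the conjugate dual of $X$ (continuous conjugate-linear functionals on $X$); $X$ is identified with $X^{\ast\ast}$. For $v\in X^\ast$, $x\in X$ write $(v,x):=v(x)$ and $(x,v):=\overline{v(x)}$. An operator $A$ from $X$ to $X^\ast$ is positive if $(Ax,x)\ge0$ for all $x\in\operatorname{dom}A$; its adjoint $A^\ast$ has domain $\{y\in X:x\mapsto(Ax,y)\text{ continuous on }\operatorname{dom}A\}$ and is determined by $(x,A^\ast y)=(Ax,y)$; $A$ is self-adjoint if $A=A^\ast$. For a bounded operator $E$ on $X$, $E^\ast$ is the bounded operator on $X^\ast$ with $(E^\ast v,x)=(v,Ex)$. $H_A$ is the completion of $\operatorname{ran}A$ with respect to the inner product $[Ax,Ay]_A:=(Ax,y)$. Under the stated hypotheses, $Ax\mapsto AEx$ is a well-defined bounded linear operator on $\operatorname{ran}A$ with respect to the $H_A$-norm. *)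

theory Defs
  imports "HOL-Analysis.Analysis"
begin

definition complex_banach :: "(complex \<Rightarrow> 'x::banach \<Rightarrow> 'x) \<Rightarrow> bool" where
  "complex_banach sc \<longleftrightarrow> Vector_Spaces.vector_space sc
     \<and> (\<forall>r x. sc (complex_of_real r) x = r *\<^sub>R x)
     \<and> (\<forall>c x. norm (sc c x) = cmod c * norm x)"

definition conj_dual :: "(complex \<Rightarrow> 'x::real_normed_vector \<Rightarrow> 'x) \<Rightarrow> ('x \<Rightarrow> complex) set" where
  "conj_dual sc = {v. (\<forall>x y. v (x + y) = v x + v y)
                     \<and> (\<forall>c x. v (sc c x) = cnj c * v x)
                     \<and> (\<exists>K. \<forall>x. cmod (v x) \<le> K * norm x)}"

text \<open>Reflexivity: every continuous conjugate-linear functional on the dual is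
  of the form v \<mapsto> (x,v) = conj (v x) for some x (identification X = X**).\<close>
definition reflexive_space :: "(complex \<Rightarrow> 'x::real_normed_vector \<Rightarrow> 'x) \<Rightarrow> bool" where
  "reflexive_space sc \<longleftrightarrow>
     (\<forall>\<Phi> :: ('x \<Rightarrow> complex) \<Rightarrow> complex.
        (\<forall>v\<in>conj_dual sc. \<forall>w\<in>conj_dual sc. \<Phi> (\<lambda>x. v x + w x) = \<Phi> v + \<Phi> w)
        \<and> (\<forall>c. \<forall>v\<in>conj_dual sc. \<Phi> (\<lambda>x. c * v x) = cnj c * \<Phi> v)
        \<and> (\<exists>K. \<forall>v\<in>conj_dual sc. cmod (\<Phi> v) \<le> K * onorm v)
      \<longrightarrow> (\<exists>x. \<forall>v\<in>conj_dual sc. \<Phi> v = cnj (v x)))"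

definition dual_operator ::
  "(complex \<Rightarrow> 'x::real_normed_vector \<Rightarrow> 'x) \<Rightarrow> 'x set \<Rightarrow> ('x \<Rightarrow> 'x \<Rightarrow> complex) \<Rightarrow> bool" where
  "dual_operator sc D A \<longleftrightarrow>
     0 \<in> D \<and> (\<forall>x\<in>D. \<forall>y\<in>D. x + y \<in> D) \<and> (\<forall>c. \<forall>x\<in>D. sc c x \<in> D)
     \<and> (\<forall>x\<in>D. A x \<in> conj_dual sc)
     \<and> (\<forall>x\<in>D. \<forall>y\<in>D. A (x + y) = (\<lambda>z. A x z + A y z))
     \<and> (\<forall>c. \<forall>x\<in>D. A (sc c x) = (\<lambda>z. c * A x z))"

definition positive_op :: "'x set \<Rightarrow> ('x \<Rightarrow> 'x \<Rightarrow> complex) \<Rightarrow> bool" where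
  "positive_op D A \<longleftrightarrow> (\<forall>x\<in>D. A x x \<in> \<real> \<and> 0 \<le> Re (A x x))"

definition adjoint_dom :: "'x::real_normed_vector set \<Rightarrow> ('x \<Rightarrow> 'x \<Rightarrow> complex) \<Rightarrow> 'x set" where
  "adjoint_dom D A = {y. continuous_on D (\<lambda>x. A x y)}"

text \<open>Self-adjointness A = A*: A is densely defined (so that A*y is determined
  by (x,A*y) = (Ax,y)), dom A* = dom A and (x,Ay) = (Ax,y) for x,y in dom A,
  where (x,Ay) = conj ((Ay) x).\<close>
definition selfadjoint_op :: "'x::real_normed_vector set \<Rightarrow> ('x \<Rightarrow> 'x \<Rightarrow> complex) \<Rightarrow> bool" where
  "selfadjoint_op D A \<longleftrightarrow> closure D = UNIV \<and> adjoint_dom D A = D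
     \<and> (\<forall>x\<in>D. \<forall>y\<in>D. cnj (A y x) = A x y)"

definition complex_hilbert :: "(complex \<Rightarrow> 'h::banach \<Rightarrow> 'h) \<Rightarrow> ('h \<Rightarrow> 'h \<Rightarrow> complex) \<Rightarrow> bool" where
  "complex_hilbert sc ip \<longleftrightarrow> complex_banach sc
     \<and> (\<forall>x y z. ip (x + y) z = ip x z + ip y z)
     \<and> (\<forall>c x y. ip (sc c x) y = c * ip x y)
     \<and> (\<forall>x y. ip y x = cnj (ip x y))
     \<and> (\<forall>x. ip x x \<in> \<real> \<and> 0 \<le> Re (ip x x))
     \<and> (\<forall>x. norm x = sqrt (Re (ip x x)))"

definition hilbert_selfadjoint :: "('h \<Rightarrow> 'h \<Rightarrow> complex) \<Rightarrow> ('h \<Rightarrow> 'h) \<Rightarrow> bool" where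
  "hilbert_selfadjoint ip T \<longleftrightarrow> (\<forall>h k. ip (T h) k = ip h (T k))"

end

theory Submission
  imports Defs
begin

text \<open>For \<open>x, y \<in> dom A\<close> the relation \<open>E\<^sup>* A \<subseteq> A E\<close> gives
  \<open>[Ehat Ax, Ay] = (AEx, y) = (Ax, Ey) = [Ax, Ehat Ay]\<close>, so \<open>Ehat\<close> is symmetric on the
  dense subspace \<open>ran A\<close> of \<open>H\<^sub>A\<close>. Since \<open>Ehat\<close> and the inner product are continuous,
  the symmetry passes to the closure, one argument at a time.\<close>

lemma complex_hilbert_ip_add_left:
  assumes "complex_hilbert sch ip"
  shows "ip (x + y) z = ip x z + ip y z"
  using assms unfolding complex_hilbert_def by blast

lemma complex_hilbert_ip_scale_left:
  assumes "complex_hilbert sch ip"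
  shows "ip (sch c x) y = c * ip x y"
  using assms unfolding complex_hilbert_def by blast

lemma complex_hilbert_cnj_ip:
  assumes "complex_hilbert sch ip"
  shows "cnj (ip x y) = ip y x"
proof -
  have "ip y x = cnj (ip x y)"
    using assms unfolding complex_hilbert_def by blast
  then show ?thesis by simp
qed

lemma complex_hilbert_ip_diff_left:
  assumes "complex_hilbert sch ip"
  shows "ip (x - y) z = ip x z - ip y z"
  using complex_hilbert_ip_add_left[OF assms, of "x - y" y z] by simp

lemma complex_hilbert_ip_add_right:
  assumes H: "complex_hilbert sch ip"
  shows "ip x (y + z) = ip x y + ip x z"
proof -
  have "ip x (y + z) = cnj (ip (y + z) x)"
    by (simp add: complex_hilbert_cnj_ip[OF H])
  also have "\<dots> = ip x y + ip x z"
    by (simp add: complex_hilbert_ip_add_left[OF H] complex_hilbert_cnj_ip[OF H])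
  finally show ?thesis .
qed

lemma complex_hilbert_ip_diff_right:
  assumes H: "complex_hilbert sch ip"
  shows "ip x (y - z) = ip x y - ip x z"
proof -
  have "ip x (y - z) = cnj (ip (y - z) x)"
    by (simp add: complex_hilbert_cnj_ip[OF H])
  also have "\<dots> = ip x y - ip x z"
    by (simp add: complex_hilbert_ip_diff_left[OF H] complex_hilbert_cnj_ip[OF H])
  finally show ?thesis .
qed

lemma complex_hilbert_norm_power2:
  assumes "complex_hilbert sch ip"
  shows "(norm x)\<^sup>2 = Re (ip x x)"
proof -
  have "norm x = sqrt (Re (ip x x))" "0 \<le> Re (ip x x)"
    using assms unfolding complex_hilbert_def by blast+
  then show ?thesis by simp
qed

lemma complex_hilbert_Re_ip_polarization:
  assumes H: "complex_hilbert sch ip"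
  shows "Re (ip x y) = ((norm (x + y))\<^sup>2 - (norm (x - y))\<^sup>2) / 4"
proof -
  have "(norm (x + y))\<^sup>2 - (norm (x - y))\<^sup>2 = 2 * Re (ip x y) + 2 * Re (ip y x)"
    by (simp add: complex_hilbert_norm_power2[OF H] complex_hilbert_ip_add_left[OF H]
        complex_hilbert_ip_add_right[OF H] complex_hilbert_ip_diff_left[OF H]
        complex_hilbert_ip_diff_right[OF H])
  moreover have "Re (ip y x) = Re (ip x y)"
    using arg_cong[OF complex_hilbert_cnj_ip[OF H, of x y], of Re] by simp
  ultimately show ?thesis by simp
qed

lemma complex_hilbert_Im_ip:
  assumes H: "complex_hilbert sch ip"
  shows "Im (ip x y) = Re (ip x (sch \<i> y))"
proof -
  have "ip x (sch \<i> y) = cnj (\<i> * ip y x)"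
    by (simp flip: complex_hilbert_ip_scale_left[OF H] add: complex_hilbert_cnj_ip[OF H])
  also have "\<dots> = - \<i> * ip x y"
    by (simp add: complex_hilbert_cnj_ip[OF H])
  finally show ?thesis by simp
qed

lemma complex_hilbert_polarization:
  assumes H: "complex_hilbert sch ip"
  shows "ip h k = complex_of_real (((norm (h + k))\<^sup>2 - (norm (h - k))\<^sup>2) / 4)
     + \<i> * complex_of_real (((norm (h + sch \<i> k))\<^sup>2 - (norm (h - sch \<i> k))\<^sup>2) / 4)"
  by (simp add: complex_eq_iff complex_hilbert_Im_ip[OF H] complex_hilbert_Re_ip_polarization[OF H])

lemma complex_hilbert_continuous_on_ip_left:
  assumes H: "complex_hilbert sch ip" and f: "continuous_on S f"
  shows "continuous_on S (\<lambda>s. ip (f s) k)"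
  unfolding complex_hilbert_polarization[OF H] by (auto intro!: continuous_intros f)

lemma complex_hilbert_continuous_on_ip_right:
  assumes H: "complex_hilbert sch ip" and f: "continuous_on S f"
  shows "continuous_on S (\<lambda>s. ip h (f s))"
proof -
  have "continuous_on S (\<lambda>s. cnj (ip (f s) h))"
    by (intro continuous_on_cnj complex_hilbert_continuous_on_ip_left[OF H f])
  then show ?thesis
    by (simp add: complex_hilbert_cnj_ip[OF H])
qed

lemma hilbert_selfadjoint_if_symmetric_on_dense:
  assumes H: "complex_hilbert sch ip" and T: "continuous_on UNIV T"
    and dense: "closure S = UNIV"
    and symmetric: "\<And>h k. h \<in> S \<Longrightarrow> k \<in> S \<Longrightarrow> ip (T h) k = ip h (T k)"
  shows "hilbert_selfadjoint ip T"
proof -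
  have cont_left: "continuous_on UNIV (\<lambda>h. ip (T h) k - ip h (T k))" for k
    by (intro continuous_intros complex_hilbert_continuous_on_ip_left[OF H] T)
  have cont_right: "continuous_on UNIV (\<lambda>k. ip (T h) k - ip h (T k))" for h
    by (intro continuous_intros complex_hilbert_continuous_on_ip_right[OF H] T)
  have symmetric_left: "ip (T h) k = ip h (T k)" if "k \<in> S" for h k
    using continuous_constant_on_closure[of S "\<lambda>h. ip (T h) k - ip h (T k)" 0 h]
      cont_left symmetric that dense by simp
  have "ip (T h) k = ip h (T k)" for h k
    using continuous_constant_on_closure[of S "\<lambda>k. ip (T h) k - ip h (T k)" 0 k]
      cont_right symmetric_left dense by simp
  then show ?thesis
    unfolding hilbert_selfadjoint_def by blast
qed

theorem lemma5:
  fixes sc :: "complex \<Rightarrow> 'x::banach \<Rightarrow> 'x"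
    and D :: "'x set" and A :: "'x \<Rightarrow> 'x \<Rightarrow> complex" and E :: "'x \<Rightarrow> 'x"
    and sch :: "complex \<Rightarrow> 'h::banach \<Rightarrow> 'h" and ip :: "'h \<Rightarrow> 'h \<Rightarrow> complex"
    and J :: "('x \<Rightarrow> complex) \<Rightarrow> 'h" and Ehat :: "'h \<Rightarrow> 'h"
  assumes X: "complex_banach sc" and refl: "reflexive_space sc"
    and Aop: "dual_operator sc D A" and Apos: "positive_op D A" and Asa: "selfadjoint_op D A"
    and Ebd: "bounded_linear E" and Elin: "\<forall>c x. E (sc c x) = sc c (E x)"
    and Edom: "E ` D \<subseteq> D"
    and EA: "\<forall>x\<in>D. (\<lambda>z. A x (E z)) = A (E x)"
    and H: "complex_hilbert sch ip"
    and Jadd: "\<forall>x\<in>D. \<forall>y\<in>D. J (A (x + y)) = J (A x) + J (A y)"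
    and Jscale: "\<forall>c. \<forall>x\<in>D. J (A (sc c x)) = sch c (J (A x))"
    and Jip: "\<forall>x\<in>D. \<forall>y\<in>D. ip (J (A x)) (J (A y)) = A x y"
    and Jdense: "closure (J ` A ` D) = UNIV"
    and Ehat_bd: "bounded_linear Ehat" and Ehat_lin: "\<forall>c h. Ehat (sch c h) = sch c (Ehat h)"
    and Ehat_ext: "\<forall>x\<in>D. Ehat (J (A x)) = J (A (E x))"
  shows "hilbert_selfadjoint ip Ehat"
proof (rule hilbert_selfadjoint_if_symmetric_on_dense[OF H _ Jdense])
  \<comment> \<open>Only the intertwining relation, \<open>Jip\<close>, density and continuity of \<open>Ehat\<close> enter; the
    remaining hypotheses are what make \<open>H\<^sub>A\<close> and \<open>Ehat\<close> exist in the first place.\<close>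
  show "continuous_on UNIV Ehat"
    using Ehat_bd by (rule linear_continuous_on)
  fix h k assume "h \<in> J ` A ` D" "k \<in> J ` A ` D"
  then obtain x y where xy: "x \<in> D" "y \<in> D" and hk: "h = J (A x)" "k = J (A y)"
    by blast
  have "ip (Ehat h) k = A (E x) y"
    using hk xy Edom Ehat_ext Jip by auto
  also have "\<dots> = A x (E y)"
    using EA xy by metis
  also have "\<dots> = ip h (Ehat k)"
    using hk xy Edom Ehat_ext Jip by auto
  finally show "ip (Ehat h) k = ip h (Ehat k)" .
qed

end
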